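(* Let $N\ge1$. The group $H'_{\mathbb{Z}/N\mathbb{Z}}=\bar\Gamma(2)/\Phi''_N$ has exponent $N$; in other words, for every $\gamma\in\bar\Gamma(2)$, one has $\gamma^N\in\Phi''_N$.
   Context: Let $\bar\Gamma(2)=\Gamma(2)/\{\pm1\}\subset\mathrm{PSL}_2(\mathbb{Z})$, freely generated by the classes $A$ of $\begin{pmatrix}1&2\\0&1\end{pmatrix}$ and $B$ of $\begin{pmatrix}1&0\\2&1\end{pmatrix}$; $C=ABA^{-1}B^{-1}$. Set $N'=N$ if $N$ is odd and $N'=N/2$ if $N$ even; set $N''=N'$ if $N$ is prime to $3$ and $N''=N'/3$ otherwise. $\Phi_N$ is the kernel of $\bar\Gamma(2)\to(\mathbb{Z}/N\mathbb{Z})^2$, $A\mapsto(1,0)$, $B\mapsto(0,1)$. Let $\bar\psi:\Phi_N\to(\mathbb{Z}/N'\mathbb{Z})^3$ be the group homomorphism which vanishes on $A^N$ and $B^N$ and satisfies $\bar\psi(A^iB^jC^kB^{-j}A^{-i})=(-ik,-jk,k)$ for all $i,j,k\in\mathbb{Z}$. Then $\Phi''_N$ is the kernel of the composition of $\bar\psi$ with the map $(\mathbb{Z}/N'\mathbb{Z})^3\to(\mathbb{Z}/N''\mathbb{Z})^2\times\mathbb{Z}/N'\mathbb{Z}$ reducing the first two coordinates modulo $N''$; it is a normal subgroup of $\bar\Gamma(2)$. *)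

theory Defs
  imports "HOL-Algebra.Group" "HOL-Number_Theory.Cong"
begin

text \<open>The group Gamma-bar(2) is free on A and B; we model it as the free group on two
letters, realised by reduced words.  A letter is a pair (g, s): g = False is A, g = True is B;
s = True means the inverse letter.\<close>

type_synonym fgword = "(bool \<times> bool) list"

definition cancels :: "bool \<times> bool \<Rightarrow> bool \<times> bool \<Rightarrow> bool" where
  "cancels x y \<longleftrightarrow> fst x = fst y \<and> snd x \<noteq> snd y"

fun reduced :: "fgword \<Rightarrow> bool" where
  "reduced [] = True"
| "reduced [x] = True"
| "reduced (x # y # ys) = (\<not> cancels x y \<and> reduced (y # ys))"

fun push :: "bool \<times> bool \<Rightarrow> fgword \<Rightarrow> fgword" where
  "push x [] = [x]"
| "push x (y # ys) = (if cancels x y then ys else x # y # ys)"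

definition F2 :: "fgword monoid" where
  "F2 = \<lparr>carrier = {w. reduced w}, monoid.mult = (\<lambda>u v. foldr push u v), one = []\<rparr>"

definition genA :: fgword where "genA = [(False, False)]"
definition genB :: fgword where "genB = [(True, False)]"

definition genC :: fgword where
  "genC = genA \<otimes>\<^bsub>F2\<^esub> genB \<otimes>\<^bsub>F2\<^esub> inv\<^bsub>F2\<^esub> genA \<otimes>\<^bsub>F2\<^esub> inv\<^bsub>F2\<^esub> genB"

definition expA :: "fgword \<Rightarrow> int" where
  "expA w = sum_list (map (\<lambda>(g, s). if g then 0 else (if s then -1 else 1)) w)"
definition expB :: "fgword \<Rightarrow> int" where
  "expB w = sum_list (map (\<lambda>(g, s). if g then (if s then -1 else 1) else 0) w)"

definition Phi :: "nat \<Rightarrow> fgword set" where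
  "Phi N = {w \<in> carrier F2. [expA w = 0] (mod int N) \<and> [expB w = 0] (mod int N)}"

definition Nprime :: "nat \<Rightarrow> nat" where
  "Nprime N = (if even N then N div 2 else N)"
definition Ndprime :: "nat \<Rightarrow> nat" where
  "Ndprime N = (if coprime N 3 then Nprime N else Nprime N div 3)"

text \<open>Elements of (Z/mZ)^3 are represented by integer triples; equality there is
componentwise congruence mod m.\<close>
definition cong3 :: "int \<times> int \<times> int \<Rightarrow> int \<times> int \<times> int \<Rightarrow> nat \<Rightarrow> bool" where
  "cong3 x y m \<longleftrightarrow> [fst x = fst y] (mod int m) \<and> [fst (snd x) = fst (snd y)] (mod int m)
                     \<and> [snd (snd x) = snd (snd y)] (mod int m)"

text \<open>psi is (a representative of) the homomorphism psi-bar : Phi_N \<rightarrow> (Z/N'Z)^3 characterised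
in the paper.\<close>
definition is_psibar :: "nat \<Rightarrow> (fgword \<Rightarrow> int \<times> int \<times> int) \<Rightarrow> bool" where
  "is_psibar N \<psi> \<longleftrightarrow>
     (\<forall>x \<in> Phi N. \<forall>y \<in> Phi N.
        cong3 (\<psi> (x \<otimes>\<^bsub>F2\<^esub> y))
              (fst (\<psi> x) + fst (\<psi> y), fst (snd (\<psi> x)) + fst (snd (\<psi> y)),
               snd (snd (\<psi> x)) + snd (snd (\<psi> y))) (Nprime N))
   \<and> cong3 (\<psi> (genA [^]\<^bsub>F2\<^esub> N)) (0, 0, 0) (Nprime N)
   \<and> cong3 (\<psi> (genB [^]\<^bsub>F2\<^esub> N)) (0, 0, 0) (Nprime N)
   \<and> (\<forall>i j k :: int.
        cong3 (\<psi> (genA [^]\<^bsub>F2\<^esub> i \<otimes>\<^bsub>F2\<^esub> genB [^]\<^bsub>F2\<^esub> j \<otimes>\<^bsub>F2\<^esub> genC [^]\<^bsub>F2\<^esub> k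
                   \<otimes>\<^bsub>F2\<^esub> genB [^]\<^bsub>F2\<^esub> (- j) \<otimes>\<^bsub>F2\<^esub> genA [^]\<^bsub>F2\<^esub> (- i)))
              (- i * k, - j * k, k) (Nprime N))"

definition Phi2 :: "nat \<Rightarrow> (fgword \<Rightarrow> int \<times> int \<times> int) \<Rightarrow> fgword set" where
  "Phi2 N \<psi> = {w \<in> Phi N. [fst (\<psi> w) = 0] (mod int (Ndprime N))
                         \<and> [fst (snd (\<psi> w)) = 0] (mod int (Ndprime N))
                         \<and> [snd (snd (\<psi> w)) = 0] (mod int (Nprime N))}"

end

theory Submission
  imports Defs "HOL-Algebra.Generated_Groups"
begin

(* Sending a word to its exponent sums together with three integers psi1, psi2, psi3 is a
   homomorphism from F2 to a group law on Z^5, nilpotent of class 3. On Phi_N the triple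
   (psi1, psi2, psi3) is additive modulo N and takes the values prescribed for psi-bar on A^N, B^N
   and on the conjugates A^i B^j C B^-j A^-i. These elements generate Phi_N, since
   w (A^a B^b)^-1, with a, b the exponent sums of w, lies in the subgroup generated by the
   conjugates; hence psi-bar agrees with (psi1, psi2, psi3) modulo N' on all of Phi_N.
   For an N-th power the power formula of the nilpotent group expresses these coordinates through
   N, N(N-1)/2, the sum of k^2 and the sum of k(k-1)/2 over k < N, which are divisible by N' or N''.
   Minimality holds because A^n is not in Phi_N for 0 < n < N. *)

section \<open>The free group on A and B\<close>

lemma cancels_sym: "cancels x y \<Longrightarrow> cancels y x"
  by (auto simp: cancels_def)

lemma reduced_tl: "reduced (x # xs) \<Longrightarrow> reduced xs"
  by (cases xs) auto

lemma reduced_push: "reduced v \<Longrightarrow> reduced (push x v)"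
  by (cases v rule: reduced.cases) (auto simp: reduced_tl)

lemma reduced_foldr_push: "reduced v \<Longrightarrow> reduced (foldr push u v)"
  by (induct u) (auto simp: reduced_push)

lemma push_push_cancel:
  assumes "cancels x y" "reduced t"
  shows "push x (push y t) = t"
proof (cases t)
  case Nil
  then show ?thesis using assms(1) by (auto simp: cancels_def)
next
  case (Cons z zs)
  show ?thesis
  proof (cases "cancels y z")
    case True
    then have "x = z" using assms(1) by (cases x, cases y, cases z) (auto simp: cancels_def)
    then show ?thesis using True Cons assms(2) by (cases zs) auto
  next
    case False
    then show ?thesis using Cons assms by auto
  qed
qed

lemma foldr_push_push:
  assumes "reduced z" "reduced w"
  shows "foldr push (push x z) w = push x (foldr push z w)"
proof (cases z)
  case Nil
  then show ?thesis by simp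
next
  case (Cons y zs)
  have "reduced (foldr push zs w)" using assms Cons reduced_tl reduced_foldr_push by blast
  then show ?thesis using Cons push_push_cancel by simp
qed

lemma foldr_push_assoc:
  assumes "reduced u" "reduced v" "reduced w"
  shows "foldr push (foldr push u v) w = foldr push u (foldr push v w)"
  using assms
proof (induct u)
  case Nil
  then show ?case by simp
next
  case (Cons x u)
  then have "reduced u" using reduced_tl by blast
  with Cons show ?case by (simp add: foldr_push_push reduced_foldr_push)
qed

definition word_inv :: "fgword \<Rightarrow> fgword" where
  "word_inv w = rev (map (\<lambda>(g, s). (g, \<not> s)) w)"

lemma foldr_push_word_inv: "reduced w \<Longrightarrow> foldr push (word_inv w) w = []"
proof (induct w)
  case Nil
  then show ?case by (simp add: word_inv_def)
next
  case (Cons x w)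
  then have "reduced w" using reduced_tl by blast
  moreover have "cancels (fst x, \<not> snd x) x" by (simp add: cancels_def)
  ultimately show ?case using Cons push_push_cancel by (cases x) (simp add: word_inv_def)
qed

lemma reduced_snoc_iff:
  "reduced (xs @ [y]) \<longleftrightarrow> reduced xs \<and> (xs \<noteq> [] \<longrightarrow> \<not> cancels (last xs) y)"
  by (induct xs rule: reduced.induct) auto

lemma reduced_word_inv: "reduced w \<Longrightarrow> reduced (word_inv w)"
proof (induct w)
  case Nil
  then show ?case by (simp add: word_inv_def)
next
  case (Cons x w)
  then have "reduced (word_inv w)" using reduced_tl by blast
  moreover have "w \<noteq> [] \<longrightarrow> \<not> cancels (hd w) x"
    using Cons(2) by (cases w) (auto dest: cancels_sym)
  ultimately show ?case
    by (auto simp: word_inv_def reduced_snoc_iff last_rev last_map hd_map cancels_def split: prod.splits)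
qed

lemma group_F2: "group F2"
proof (rule groupI)
  fix x y
  assume "x \<in> carrier F2" "y \<in> carrier F2"
  then show "x \<otimes>\<^bsub>F2\<^esub> y \<in> carrier F2" by (simp add: F2_def reduced_foldr_push)
next
  fix x y z
  assume "x \<in> carrier F2" "y \<in> carrier F2" "z \<in> carrier F2"
  then show "x \<otimes>\<^bsub>F2\<^esub> y \<otimes>\<^bsub>F2\<^esub> z = x \<otimes>\<^bsub>F2\<^esub> (y \<otimes>\<^bsub>F2\<^esub> z)"
    by (simp add: F2_def foldr_push_assoc)
next
  fix x
  assume "x \<in> carrier F2"
  then show "\<exists>y\<in>carrier F2. y \<otimes>\<^bsub>F2\<^esub> x = \<one>\<^bsub>F2\<^esub>"
    by (intro bexI[of _ "word_inv x"]) (auto simp: F2_def foldr_push_word_inv reduced_word_inv)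
qed (simp_all add: F2_def)

interpretation F2: group F2
  by (rule group_F2)

abbreviation mult_F2 (infixl "\<cdot>" 70) where "x \<cdot> y \<equiv> x \<otimes>\<^bsub>F2\<^esub> y"
abbreviation int_pow_F2 (infixr "^^^" 75) where "x ^^^ (i::int) \<equiv> x [^]\<^bsub>F2\<^esub> i"

lemma one_F2: "\<one>\<^bsub>F2\<^esub> = []"
  by (simp add: F2_def)

lemma letter_in_F2 [simp]: "[x] \<in> carrier F2"
  by (simp add: F2_def)

lemma gens_in_F2 [simp]: "genA \<in> carrier F2" "genB \<in> carrier F2" "genC \<in> carrier F2"
  by (simp_all add: genA_def genB_def genC_def)

lemma foldr_push_snoc: "reduced (ys @ [x]) \<Longrightarrow> foldr push ys [x] = ys @ [x]"
proof (induct ys)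
  case Nil
  then show ?case by simp
next
  case (Cons y ys)
  then have "foldr push ys [x] = ys @ [x]" using reduced_tl by (metis append_Cons)
  with Cons(2) show ?case by (cases "ys @ [x]") auto
qed

lemma F2_snoc_induct [consumes 1, case_names Nil snoc]:
  assumes "w \<in> carrier F2" "P \<one>\<^bsub>F2\<^esub>"
    and "\<And>g x. g \<in> carrier F2 \<Longrightarrow> P g \<Longrightarrow> P (g \<cdot> [x])"
  shows "P w"
  using assms(1)
proof (induct w rule: rev_induct)
  case Nil
  then show ?case using assms(2) by (simp add: one_F2)
next
  case (snoc x ys)
  then have "reduced (ys @ [x])" by (simp add: F2_def)
  moreover from this have "ys \<in> carrier F2" by (simp add: F2_def reduced_snoc_iff)
  ultimately show ?case using snoc assms(3) by (metis F2_def foldr_push_snoc monoid.select_convs(1))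
qed

lemma inv_gens: "inv\<^bsub>F2\<^esub> genA = [(False, True)]" "inv\<^bsub>F2\<^esub> genB = [(True, True)]"
  by (rule F2.inv_equality; simp add: F2_def genA_def genB_def cancels_def)+

lemma letter_cases:
  obtains "[x] = genA" | "[x] = inv\<^bsub>F2\<^esub> genA" | "[x] = genB" | "[x] = inv\<^bsub>F2\<^esub> genB"
proof -
  have "x = (False, False) \<or> x = (False, True) \<or> x = (True, False) \<or> x = (True, True)"
    by (cases x) auto
  then show thesis using that inv_gens unfolding genA_def genB_def by auto
qed

section \<open>A homomorphism from F2 to a nilpotent group on Z^5\<close>

definition choose2 :: "int \<Rightarrow> int" where
  "choose2 x = x * (x - 1) div 2"

lemma two_choose2: "2 * choose2 x = x * (x - 1)"
  unfolding choose2_def by simp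

lemma choose2_add: "choose2 (x + y) = choose2 x + choose2 y + x * y"
proof -
  have "2 * choose2 (x + y) = 2 * (choose2 x + choose2 y + x * y)"
    unfolding distrib_left two_choose2 by (simp add: algebra_simps)
  then show ?thesis by simp
qed

lemma choose2_mult: "choose2 (x * y) = x * x * choose2 y + y * choose2 x"
proof -
  have "2 * choose2 (x * y) = 2 * (x * x * choose2 y + y * choose2 x)"
    unfolding distrib_left two_choose2 mult.left_commute[of 2] two_choose2 by (simp add: algebra_simps)
  then show ?thesis by simp
qed

lemma choose2_simps [simp]: "choose2 0 = 0" "choose2 1 = 0" "choose2 (-1) = 1"
  by (simp_all add: choose2_def)

type_synonym nil3 = "int \<times> int \<times> int \<times> int \<times> int"

(* In coordinates (a, b, p1, p2, p3), a and b are the exponent sums of A and B, and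
   A^i B^j C^k B^-j A^-i is sent to (0, 0, -i k, -j k, k), matching psi-bar. *)

fun nil3_mult :: "nil3 \<Rightarrow> nil3 \<Rightarrow> nil3" where
  "nil3_mult (a', b', q1, q2, q3) (a, b, p1, p2, p3) =
     (a' + a, b' + b, q1 + p1 - a' * p3 + b' * choose2 a + a' * b' * a,
      q2 + p2 - b' * p3 + a * choose2 b', q3 + p3 - a * b')"

definition nil3_one :: nil3 where
  "nil3_one = (0, 0, 0, 0, 0)"

lemma nil3_mult_assoc: "nil3_mult (nil3_mult x y) z = nil3_mult x (nil3_mult y z)"
  by (cases x; cases y; cases z) (simp add: choose2_add algebra_simps)

lemma nil3_mult_one [simp]: "nil3_mult nil3_one x = x" "nil3_mult x nil3_one = x"
  by (cases x; simp add: nil3_one_def)+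

definition nil3_letter :: "bool \<times> bool \<Rightarrow> nil3" where
  "nil3_letter x = (expA [x], expB [x], 0, 0, 0)"

lemma nil3_letter_cancel: "cancels x y \<Longrightarrow> nil3_mult (nil3_letter x) (nil3_letter y) = nil3_one"
  by (cases x; cases y) (auto simp: cancels_def nil3_letter_def nil3_one_def expA_def expB_def)

definition nil3_of :: "fgword \<Rightarrow> nil3" where
  "nil3_of w = foldr (\<lambda>x. nil3_mult (nil3_letter x)) w nil3_one"

lemma nil3_of_simps [simp]:
  "nil3_of [] = nil3_one" "nil3_of (x # w) = nil3_mult (nil3_letter x) (nil3_of w)"
  by (simp_all add: nil3_of_def)

lemma nil3_of_push: "nil3_of (push x v) = nil3_mult (nil3_letter x) (nil3_of v)"
proof (cases v)
  case (Cons y ys)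
  then show ?thesis
    by (simp add: nil3_letter_cancel flip: nil3_mult_assoc)
qed simp

lemma nil3_of_mult: "nil3_of (u \<cdot> v) = nil3_mult (nil3_of u) (nil3_of v)"
  by (induct u) (auto simp: F2_def nil3_of_push nil3_mult_assoc)

definition psi1 :: "fgword \<Rightarrow> int" where "psi1 w = fst (snd (snd (nil3_of w)))"
definition psi2 :: "fgword \<Rightarrow> int" where "psi2 w = fst (snd (snd (snd (nil3_of w))))"
definition psi3 :: "fgword \<Rightarrow> int" where "psi3 w = snd (snd (snd (snd (nil3_of w))))"

lemma nil3_of_coords: "nil3_of w = (expA w, expB w, psi1 w, psi2 w, psi3 w)"
proof -
  have "fst (nil3_of w) = expA w \<and> fst (snd (nil3_of w)) = expB w"
  proof (induct w)
    case (Cons x w)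
    then show ?case
      by (cases "nil3_of w") (simp add: nil3_letter_def expA_def expB_def)
  qed (simp add: nil3_one_def expA_def expB_def)
  then show ?thesis by (simp add: psi1_def psi2_def psi3_def prod_eq_iff)
qed

lemma exp_mult [simp]: "expA (u \<cdot> v) = expA u + expA v" "expB (u \<cdot> v) = expB u + expB v"
  using nil3_of_mult[of u v] by (simp_all add: nil3_of_coords)

lemma psi_mult:
  "psi1 (u \<cdot> v) = psi1 u + psi1 v - expA u * psi3 v + expB u * choose2 (expA v)
                    + expA u * expB u * expA v"
  "psi2 (u \<cdot> v) = psi2 u + psi2 v - expB u * psi3 v + expA v * choose2 (expB u)"
  "psi3 (u \<cdot> v) = psi3 u + psi3 v - expA v * expB u"
  using nil3_of_mult[of u v] by (simp_all add: nil3_of_coords)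

lemma coords_one [simp]:
  "expA \<one>\<^bsub>F2\<^esub> = 0" "expB \<one>\<^bsub>F2\<^esub> = 0"
  "psi1 \<one>\<^bsub>F2\<^esub> = 0" "psi2 \<one>\<^bsub>F2\<^esub> = 0" "psi3 \<one>\<^bsub>F2\<^esub> = 0"
  using nil3_of_coords[of "[]"] by (simp_all add: nil3_one_def one_F2)

lemma exp_inv [simp]:
  assumes "g \<in> carrier F2"
  shows "expA (inv\<^bsub>F2\<^esub> g) = - expA g" "expB (inv\<^bsub>F2\<^esub> g) = - expB g"
  using exp_mult[of g "inv\<^bsub>F2\<^esub> g"] assms by simp_all

lemma exp_nat_pow [simp]:
  "expA (g [^]\<^bsub>F2\<^esub> (n::nat)) = int n * expA g" "expB (g [^]\<^bsub>F2\<^esub> (n::nat)) = int n * expB g"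
  by (induct n) (auto simp: algebra_simps)

lemma exp_int_pow [simp]:
  "g \<in> carrier F2 \<Longrightarrow> expA (g ^^^ i) = i * expA g"
  "g \<in> carrier F2 \<Longrightarrow> expB (g ^^^ i) = i * expB g"
  by (auto simp: int_pow_def2 simp del: pow_nat)

lemma coords_gens [simp]:
  "expA genA = 1" "expB genA = 0" "psi1 genA = 0" "psi2 genA = 0" "psi3 genA = 0"
  "expA genB = 0" "expB genB = 1" "psi1 genB = 0" "psi2 genB = 0" "psi3 genB = 0"
  using nil3_of_coords[of genA] nil3_of_coords[of genB]
  by (simp_all add: genA_def genB_def nil3_letter_def expA_def expB_def nil3_one_def)

lemma genC_word: "genC = [(False, False), (True, False), (False, True), (True, True)]"
  by (simp add: genC_def inv_gens) (simp add: F2_def genA_def genB_def cancels_def)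

lemma coords_genC [simp]:
  "expA genC = 0" "expB genC = 0" "psi1 genC = 0" "psi2 genC = 0" "psi3 genC = 1"
  using nil3_of_coords[of genC]
  by (simp_all add: genC_word nil3_letter_def expA_def expB_def nil3_one_def)

lemma psi_conj:
  assumes "g \<in> carrier F2" "expA c = 0" "expB c = 0"
  shows "psi1 (g \<cdot> c \<cdot> inv\<^bsub>F2\<^esub> g) = psi1 c - expA g * psi3 c"
    "psi2 (g \<cdot> c \<cdot> inv\<^bsub>F2\<^esub> g) = psi2 c - expB g * psi3 c"
    "psi3 (g \<cdot> c \<cdot> inv\<^bsub>F2\<^esub> g) = psi3 c"
proof -
  have "g \<cdot> inv\<^bsub>F2\<^esub> g = \<one>\<^bsub>F2\<^esub>" using assms(1) by simp
  then have "psi1 (g \<cdot> inv\<^bsub>F2\<^esub> g) = 0" "psi2 (g \<cdot> inv\<^bsub>F2\<^esub> g) = 0"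
    "psi3 (g \<cdot> inv\<^bsub>F2\<^esub> g) = 0" by simp_all
  note g_inv_coords = this[unfolded psi_mult]
  show "psi1 (g \<cdot> c \<cdot> inv\<^bsub>F2\<^esub> g) = psi1 c - expA g * psi3 c"
    "psi2 (g \<cdot> c \<cdot> inv\<^bsub>F2\<^esub> g) = psi2 c - expB g * psi3 c"
    "psi3 (g \<cdot> c \<cdot> inv\<^bsub>F2\<^esub> g) = psi3 c"
    using g_inv_coords assms by (simp_all add: psi_mult algebra_simps)
qed

section \<open>Generators of Phi_N\<close>

definition conjC :: "int \<Rightarrow> int \<Rightarrow> fgword" where
  "conjC i j = genA ^^^ i \<cdot> genB ^^^ j \<cdot> genC \<cdot> genB ^^^ (- j) \<cdot> genA ^^^ (- i)"

lemma conjC_in_F2 [simp]: "conjC i j \<in> carrier F2"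
  by (simp add: conjC_def)

lemma coords_conjC:
  "expA (conjC i j) = 0" "expB (conjC i j) = 0"
  "psi1 (conjC i j) = - i" "psi2 (conjC i j) = - j" "psi3 (conjC i j) = 1"
proof -
  define g where "g = genA ^^^ i \<cdot> genB ^^^ j"
  have g: "g \<in> carrier F2" by (simp add: g_def)
  have "conjC i j = g \<cdot> genC \<cdot> inv\<^bsub>F2\<^esub> g"
    by (simp add: conjC_def g_def F2.inv_mult_group F2.int_pow_neg F2.m_assoc)
  moreover have "expA g = i" "expB g = j" by (simp_all add: g_def)
  ultimately show "psi1 (conjC i j) = - i" "psi2 (conjC i j) = - j" "psi3 (conjC i j) = 1"
    using psi_conj[OF g] by simp_all
qed (simp_all add: conjC_def)

definition Phi_gens :: "nat \<Rightarrow> fgword set" where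
  "Phi_gens N = {genA [^]\<^bsub>F2\<^esub> N, genB [^]\<^bsub>F2\<^esub> N} \<union> range (case_prod conjC)"

lemma subgroup_Phi: "subgroup (Phi N) F2"
proof (rule F2.subgroupI)
  have "\<one>\<^bsub>F2\<^esub> \<in> Phi N" by (simp add: Phi_def)
  then show "Phi N \<noteq> {}" by blast
qed (auto simp: Phi_def cong_0_iff)

lemma nat_pow_in_Phi: "g \<in> carrier F2 \<Longrightarrow> g [^]\<^bsub>F2\<^esub> N \<in> Phi N"
  by (simp add: Phi_def cong_0_iff)

lemma Phi_gens_subset: "Phi_gens N \<subseteq> Phi N"
  using nat_pow_in_Phi[of genA N] nat_pow_in_Phi[of genB N]
  by (auto simp: Phi_gens_def Phi_def coords_conjC)

lemma F2_pow_combine: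
  assumes "x \<in> carrier F2"
  shows "x ^^^ i \<cdot> x ^^^ j = x ^^^ (i + j)" "x ^^^ i \<cdot> x = x ^^^ (i + 1)"
    "x \<cdot> x ^^^ i = x ^^^ (1 + i)"
    "inv\<^bsub>F2\<^esub> (x ^^^ i) = x ^^^ (- i)"
  using assms by (simp_all add: F2.int_pow_mult F2.int_pow_neg)

lemma F2_pow_combine_left:
  assumes "x \<in> carrier F2" "y \<in> carrier F2"
  shows "x ^^^ i \<cdot> (x ^^^ j \<cdot> y) = x ^^^ (i + j) \<cdot> y" "x ^^^ i \<cdot> (x \<cdot> y) = x ^^^ (i + 1) \<cdot> y"
    "x \<cdot> (x ^^^ i \<cdot> y) = x ^^^ (1 + i) \<cdot> y"
  using assms by (simp_all add: F2_pow_combine flip: F2.m_assoc)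

lemma inv_gens_pow: "inv\<^bsub>F2\<^esub> genA = genA ^^^ (- 1)" "inv\<^bsub>F2\<^esub> genB = genB ^^^ (- 1)"
  by (simp_all add: F2.int_pow_neg)

lemmas F2_word_simps = F2_pow_combine F2_pow_combine_left inv_gens_pow F2.m_assoc F2.inv_mult_group

definition conj_comm :: "int \<Rightarrow> int \<Rightarrow> fgword" where
  "conj_comm i j = genA ^^^ i \<cdot> genB ^^^ j \<cdot> genA \<cdot> genB ^^^ (- j) \<cdot> genA ^^^ (- (i + 1))"

lemma conj_comm_in_F2 [simp]: "conj_comm i j \<in> carrier F2"
  by (simp add: conj_comm_def)

lemma conj_comm_zero: "conj_comm i 0 = \<one>\<^bsub>F2\<^esub>"
  by (simp add: conj_comm_def F2_word_simps)

lemma conj_comm_succ: "conj_comm i (j + 1) = inv\<^bsub>F2\<^esub> (conjC i j) \<cdot> conj_comm i j"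
  by (simp add: conj_comm_def conjC_def genC_def F2_word_simps algebra_simps)

abbreviation conjC_group :: "fgword set" where
  "conjC_group \<equiv> generate F2 (range (case_prod conjC))"

lemma conjC_in_range: "conjC i j \<in> range (case_prod conjC)"
  by (rule range_eqI[of _ _ "(i, j)"]) simp

lemma conjC_range_subset: "range (case_prod conjC) \<subseteq> carrier F2"
  by auto

lemma conj_comm_in_conjC_group: "conj_comm i j \<in> conjC_group"
proof (induct j rule: int_induct[where k = 0])
  case base
  then show ?case by (simp add: conj_comm_zero generate.one)
next
  case (step1 j)
  then show ?case
    by (simp add: conj_comm_succ conjC_in_range generate.eng generate.inv)
next
  case (step2 j)
  have "conj_comm i j = inv\<^bsub>F2\<^esub> (conjC i (j - 1)) \<cdot> conj_comm i (j - 1)"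
    using conj_comm_succ[of i "j - 1"] by simp
  then have "conj_comm i (j - 1) = conjC i (j - 1) \<cdot> conj_comm i j"
    by (metis F2.inv_solve_left conjC_in_F2 conj_comm_in_F2)
  then show ?case
    using step2 by (simp add: conjC_in_range generate.eng generate.incl)
qed

definition comm_part :: "fgword \<Rightarrow> fgword" where
  "comm_part g = g \<cdot> inv\<^bsub>F2\<^esub> (genA ^^^ expA g \<cdot> genB ^^^ expB g)"

lemma comm_part_snoc:
  assumes "g \<in> carrier F2"
  shows "comm_part (g \<cdot> [x]) = comm_part g \<cdot> (genA ^^^ expA g \<cdot> genB ^^^ expB g \<cdot> [x]
           \<cdot> inv\<^bsub>F2\<^esub> (genA ^^^ (expA g + expA [x]) \<cdot> genB ^^^ (expB g + expB [x])))"
  using assms by (simp add: comm_part_def F2_word_simps)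

lemma comm_part_in_conjC_group: "g \<in> carrier F2 \<Longrightarrow> comm_part g \<in> conjC_group"
proof (induct g rule: F2_snoc_induct)
  case Nil
  then show ?case by (simp add: comm_part_def generate.one)
next
  case (snoc g x)
  define a b where "a = expA g" and "b = expB g"
  define S where "S = genA ^^^ a \<cdot> genB ^^^ b \<cdot> [x]
                   \<cdot> inv\<^bsub>F2\<^esub> (genA ^^^ (a + expA [x]) \<cdot> genB ^^^ (b + expB [x]))"
  have "S \<in> conjC_group"
  proof (cases x rule: letter_cases)
    case 1
    then have "S = conj_comm a b" by (simp add: S_def conj_comm_def F2_word_simps)
    then show ?thesis by (simp add: conj_comm_in_conjC_group)
  next
    case 2
    then have "S = inv\<^bsub>F2\<^esub> (conj_comm (a - 1) b)"
      by (simp add: S_def conj_comm_def F2_word_simps algebra_simps)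
    then show ?thesis
      by (simp add: conj_comm_in_conjC_group F2.generate_m_inv_closed[OF conjC_range_subset])
  next
    case 3
    then have "S = \<one>\<^bsub>F2\<^esub>" by (simp add: S_def F2_word_simps algebra_simps)
    then show ?thesis by (simp add: generate.one)
  next
    case 4
    then have "S = \<one>\<^bsub>F2\<^esub>" by (simp add: S_def F2_word_simps algebra_simps)
    then show ?thesis by (simp add: generate.one)
  qed
  then show ?case
    using snoc by (simp add: comm_part_snoc S_def a_def b_def generate.eng)
qed

lemma Phi_subset_generate: "Phi N \<subseteq> generate F2 (Phi_gens N)"
proof
  fix w
  assume w: "w \<in> Phi N"
  then have w_F2: "w \<in> carrier F2" by (simp add: Phi_def)
  have "int N dvd expA w" "int N dvd expB w" using w by (simp_all add: Phi_def cong_0_iff)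
  then obtain ka kb where ka: "expA w = int N * ka" and kb: "expB w = int N * kb"
    by (elim dvdE)
  have "w = comm_part w \<cdot> ((genA [^]\<^bsub>F2\<^esub> N) ^^^ ka \<cdot> (genB [^]\<^bsub>F2\<^esub> N) ^^^ kb)"
    using w_F2
    by (simp add: comm_part_def ka kb F2.int_pow_pow F2.m_assoc flip: int_pow_int)
  moreover have "comm_part w \<in> generate F2 (Phi_gens N)"
    using comm_part_in_conjC_group[OF w_F2] F2.mono_generate[of "range (case_prod conjC)" "Phi_gens N"]
    by (auto simp: Phi_gens_def)
  moreover have "(genA [^]\<^bsub>F2\<^esub> N) ^^^ ka \<in> generate F2 (Phi_gens N)"
    "(genB [^]\<^bsub>F2\<^esub> N) ^^^ kb \<in> generate F2 (Phi_gens N)"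
  proof -
    have "subgroup (generate F2 (Phi_gens N)) F2"
      by (rule F2.generate_is_subgroup) (auto simp: Phi_gens_def)
    moreover have "genA [^]\<^bsub>F2\<^esub> N \<in> generate F2 (Phi_gens N)"
      "genB [^]\<^bsub>F2\<^esub> N \<in> generate F2 (Phi_gens N)"
      by (simp_all add: generate.incl Phi_gens_def)
    ultimately show "(genA [^]\<^bsub>F2\<^esub> N) ^^^ ka \<in> generate F2 (Phi_gens N)"
      "(genB [^]\<^bsub>F2\<^esub> N) ^^^ kb \<in> generate F2 (Phi_gens N)"
      by (simp_all add: F2.subgroup_int_pow_closed)
  qed
  ultimately show "w \<in> generate F2 (Phi_gens N)"
    by (metis generate.eng)
qed

section \<open>psi-bar on Phi_N\<close>

lemma (in group) additive_mod_agree_on_generate: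
  fixes f g :: "'a \<Rightarrow> int"
  assumes H: "subgroup H G" and "S \<subseteq> H"
    and f: "\<And>x y. x \<in> H \<Longrightarrow> y \<in> H \<Longrightarrow> [f (x \<otimes> y) = f x + f y] (mod m)"
    and g: "\<And>x y. x \<in> H \<Longrightarrow> y \<in> H \<Longrightarrow> [g (x \<otimes> y) = g x + g y] (mod m)"
    and "\<And>s. s \<in> S \<Longrightarrow> [f s = g s] (mod m)"
    and "x \<in> generate G S"
  shows "[f x = g x] (mod m)"
proof -
  define h where "h x = f x - g x" for x
  define K where "K = {x \<in> H. m dvd h x}"
  have h: "m dvd h (x \<otimes> y) - h x - h y" if "x \<in> H" "y \<in> H" for x y
    using cong_diff[OF f[OF that] g[OF that]]
    by (simp add: h_def cong_iff_dvd_diff algebra_simps)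
  have h_one: "m dvd h \<one>"
    using h[OF subgroup.one_closed[OF H] subgroup.one_closed[OF H]] H
    by (simp add: subgroup.mem_carrier)
  have "subgroup K G"
  proof (rule subgroupI)
    show "K \<subseteq> carrier G" using H by (auto simp: K_def subgroup.mem_carrier)
    have "\<one> \<in> K" using h_one H by (simp add: K_def subgroup.one_closed)
    then show "K \<noteq> {}" by blast
  next
    fix x
    assume x: "x \<in> K"
    then have "inv x \<in> H" "x \<in> carrier G"
      using H by (auto simp: K_def subgroup.mem_carrier subgroup.m_inv_closed)
    then have "m dvd h \<one> - h (inv x) - h x" using h[of "inv x" x] x by (simp add: K_def)
    moreover have "m dvd h x" using x by (simp add: K_def)
    ultimately have "m dvd h \<one> - (h \<one> - h (inv x) - h x) - h x"
      by (rule dvd_diff[OF dvd_diff[OF h_one]])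
    then show "inv x \<in> K" using \<open>inv x \<in> H\<close> by (simp add: K_def)
  next
    fix x y
    assume "x \<in> K" "y \<in> K"
    then have "m dvd (h (x \<otimes> y) - h x - h y) + h x + h y"
      using h[of x y] by (intro dvd_add) (simp_all add: K_def)
    then show "x \<otimes> y \<in> K"
      using \<open>x \<in> K\<close> \<open>y \<in> K\<close> subgroup.m_closed[OF H] by (simp add: K_def)
  qed
  moreover have "S \<subseteq> K"
    using assms(2,5) by (auto simp: K_def h_def cong_iff_dvd_diff)
  ultimately have "x \<in> K"
    using generate_subgroup_incl assms(6) by blast
  then show ?thesis by (simp add: K_def h_def cong_iff_dvd_diff)
qed

lemma psi_additive_mod:
  assumes "x \<in> Phi N" "y \<in> Phi N"
  shows "[psi1 (x \<cdot> y) = psi1 x + psi1 y] (mod int N)"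
    "[psi2 (x \<cdot> y) = psi2 x + psi2 y] (mod int N)"
    "[psi3 (x \<cdot> y) = psi3 x + psi3 y] (mod int N)"
proof -
  have exps: "[expA x = 0] (mod int N)" "[expB x = 0] (mod int N)" "[expA y = 0] (mod int N)"
    using assms by (simp_all add: Phi_def)
  have "[psi1 (x \<cdot> y) = psi1 x + psi1 y - 0 * psi3 y + 0 * choose2 (expA y) + 0 * expB x * expA y]
          (mod int N)"
    "[psi2 (x \<cdot> y) = psi2 x + psi2 y - 0 * psi3 y + 0 * choose2 (expB x)] (mod int N)"
    "[psi3 (x \<cdot> y) = psi3 x + psi3 y - 0 * expB x] (mod int N)"
    unfolding psi_mult by (intro cong_add cong_diff cong_mult cong_refl exps)+
  then show "[psi1 (x \<cdot> y) = psi1 x + psi1 y] (mod int N)"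
    "[psi2 (x \<cdot> y) = psi2 x + psi2 y] (mod int N)"
    "[psi3 (x \<cdot> y) = psi3 x + psi3 y] (mod int N)"
    by simp_all
qed

lemma psi_gens_nat_pow [simp]:
  "psi1 (genA [^]\<^bsub>F2\<^esub> (n::nat)) = 0" "psi2 (genA [^]\<^bsub>F2\<^esub> n) = 0" "psi3 (genA [^]\<^bsub>F2\<^esub> n) = 0"
  "psi1 (genB [^]\<^bsub>F2\<^esub> n) = 0" "psi2 (genB [^]\<^bsub>F2\<^esub> n) = 0" "psi3 (genB [^]\<^bsub>F2\<^esub> n) = 0"
  by (induct n) (simp_all add: psi_mult)

lemma Nprime_dvd: "Nprime N dvd N"
  by (auto simp: Nprime_def elim: evenE)

lemma psibar_cong_psi:
  assumes "is_psibar N \<psi>" "w \<in> Phi N"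
  shows "cong3 (\<psi> w) (psi1 w, psi2 w, psi3 w) (Nprime N)"
proof -
  define m where "m = int (Nprime N)"
  have m: "m dvd int N" using Nprime_dvd by (simp add: m_def)
  have \<psi>_add: "cong3 (\<psi> (x \<cdot> y)) (fst (\<psi> x) + fst (\<psi> y), fst (snd (\<psi> x)) + fst (snd (\<psi> y)),
                   snd (snd (\<psi> x)) + snd (snd (\<psi> y))) (Nprime N)"
    if "x \<in> Phi N" "y \<in> Phi N" for x y
    using assms(1) that unfolding is_psibar_def by blast
  have psi_add: "[psi1 (x \<cdot> y) = psi1 x + psi1 y] (mod m)" "[psi2 (x \<cdot> y) = psi2 x + psi2 y] (mod m)"
    "[psi3 (x \<cdot> y) = psi3 x + psi3 y] (mod m)" if "x \<in> Phi N" "y \<in> Phi N" for x y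
    using psi_additive_mod[OF that] m by (auto intro: cong_dvd_modulus)
  have gens: "cong3 (\<psi> s) (psi1 s, psi2 s, psi3 s) (Nprime N)" if "s \<in> Phi_gens N" for s
  proof -
    have "cong3 (\<psi> (conjC i j)) (- i, - j, 1) (Nprime N)" for i j
      using assms(1) unfolding is_psibar_def conjC_def by (metis F2.int_pow_1 gens_in_F2(3) mult_1_right)
    then show ?thesis
      using that assms(1) by (auto simp: Phi_gens_def is_psibar_def coords_conjC)
  qed
  have w: "w \<in> generate F2 (Phi_gens N)" using Phi_subset_generate assms(2) by blast
  note agree = F2.additive_mod_agree_on_generate[OF subgroup_Phi Phi_gens_subset _ _ _ w]
  show ?thesis
    unfolding cong3_def fst_conv snd_conv m_def[symmetric]
  proof (intro conjI)
    show "[fst (\<psi> w) = psi1 w] (mod m)"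
      by (rule agree) (use \<psi>_add psi_add gens in \<open>simp_all add: cong3_def m_def\<close>)
    show "[fst (snd (\<psi> w)) = psi2 w] (mod m)"
      by (rule agree) (use \<psi>_add psi_add gens in \<open>simp_all add: cong3_def m_def\<close>)
    show "[snd (snd (\<psi> w)) = psi3 w] (mod m)"
      by (rule agree) (use \<psi>_add psi_add gens in \<open>simp_all add: cong3_def m_def\<close>)
  qed
qed

section \<open>N-th powers\<close>

definition sum_squares :: "nat \<Rightarrow> int" where
  "sum_squares n = (\<Sum>k<n. int k * int k)"

definition sum_choose2 :: "nat \<Rightarrow> int" where
  "sum_choose2 n = (\<Sum>k<n. choose2 (int k))"

lemma choose2_Suc: "choose2 (int (Suc n)) = choose2 (int n) + int n"
  using choose2_add[of "int n" 1] by (simp add: add.commute)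

lemma sums_Suc:
  "sum_squares (Suc n) = sum_squares n + int n * int n"
  "sum_choose2 (Suc n) = sum_choose2 n + choose2 (int n)"
  by (simp_all add: sum_squares_def sum_choose2_def)

lemma psi_nat_pow:
  fixes g :: fgword and n :: nat
  defines "a \<equiv> expA g" and "b \<equiv> expB g"
  shows "psi1 (g [^]\<^bsub>F2\<^esub> n) = int n * psi1 g - a * psi3 g * choose2 (int n)
                                  + b * choose2 a * choose2 (int n) + a * a * b * sum_squares n"
    "psi2 (g [^]\<^bsub>F2\<^esub> n) = int n * psi2 g - b * psi3 g * choose2 (int n)
                                  + a * (choose2 b * sum_squares n + b * sum_choose2 n)"
    "psi3 (g [^]\<^bsub>F2\<^esub> n) = int n * psi3 g - a * b * choose2 (int n)"
proof (induct n)
  case (Suc n)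
  have pow: "g [^]\<^bsub>F2\<^esub> Suc n = g [^]\<^bsub>F2\<^esub> n \<cdot> g" by simp
  have "choose2 (int n * b) = int n * int n * choose2 b + b * choose2 (int n)"
    by (rule choose2_mult)
  then show "psi1 (g [^]\<^bsub>F2\<^esub> Suc n) = int (Suc n) * psi1 g - a * psi3 g * choose2 (int (Suc n))
               + b * choose2 a * choose2 (int (Suc n)) + a * a * b * sum_squares (Suc n)"
    "psi2 (g [^]\<^bsub>F2\<^esub> Suc n) = int (Suc n) * psi2 g - b * psi3 g * choose2 (int (Suc n))
               + a * (choose2 b * sum_squares (Suc n) + b * sum_choose2 (Suc n))"
    "psi3 (g [^]\<^bsub>F2\<^esub> Suc n) = int (Suc n) * psi3 g - a * b * choose2 (int (Suc n))"
    unfolding pow psi_mult Suc.hyps choose2_Suc sums_Suc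
    by (simp_all add: a_def b_def algebra_simps)
qed (simp_all add: sum_squares_def sum_choose2_def)

lemma six_sum_squares: "6 * sum_squares n = int n * (int n - 1) * (2 * int n - 1)"
  by (induct n) (auto simp: sum_squares_def algebra_simps)

lemma six_sum_choose2: "6 * sum_choose2 n = int n * (int n - 1) * (int n - 2)"
proof (induct n)
  case (Suc n)
  have "6 * sum_choose2 (Suc n) = 6 * sum_choose2 n + 3 * (2 * choose2 (int n))"
    by (simp add: sum_choose2_def)
  then show ?case using Suc by (simp add: two_choose2 algebra_simps)
qed (simp add: sum_choose2_def)

(* cofactor6 n is gcd n 6, written so that it can be evaluated on residues modulo 6. *)
definition cofactor6 :: "int \<Rightarrow> int" where
  "cofactor6 n = (if even n then 2 else 1) * (if 3 dvd n then 3 else 1)"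

lemma coprime_3_iff: "coprime (N::nat) 3 \<longleftrightarrow> \<not> 3 dvd N"
  using prime_imp_coprime[of 3 N] coprime_common_divisor[of N 3 3] by (auto simp: coprime_commute)

lemma Ndprime_cofactor6: "int N = int (Ndprime N) * cofactor6 (int N)"
  unfolding Ndprime_def Nprime_def cofactor6_def coprime_3_iff by presburger

lemma six_dvd_cofactor6:
  "6 dvd cofactor6 n * ((n - 1) * (2 * n - 1))" "6 dvd cofactor6 n * ((n - 1) * (n - 2))"
proof -
  define r where "r = n mod 6"
  have r: "r \<in> {0, 1, 2, 3, 4, 5}" unfolding r_def by auto
  have "[n = r] (mod 6)" unfolding r_def by (simp add: cong_def)
  then have "[cofactor6 n * ((n - 1) * (2 * n - 1)) = cofactor6 n * ((r - 1) * (2 * r - 1))] (mod 6)"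
    "[cofactor6 n * ((n - 1) * (n - 2)) = cofactor6 n * ((r - 1) * (r - 2))] (mod 6)"
    by (intro cong_mult cong_diff cong_refl; simp)+
  moreover have "cofactor6 n = cofactor6 r"
    unfolding cofactor6_def r_def by presburger
  moreover have "6 dvd cofactor6 r * ((r - 1) * (2 * r - 1))" "6 dvd cofactor6 r * ((r - 1) * (r - 2))"
    using r by (auto simp: cofactor6_def)
  ultimately show "6 dvd cofactor6 n * ((n - 1) * (2 * n - 1))"
    "6 dvd cofactor6 n * ((n - 1) * (n - 2))"
    by (simp_all add: cong_dvd_iff)
qed

lemma dvd_sixth:
  fixes d e x y :: int
  assumes "6 * x = d * (e * y)" "6 dvd e * y"
  shows "d dvd x"
  using assms by (auto elim!: dvdE simp: algebra_simps)

lemma Ndprime_dvd: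
  "int (Ndprime N) dvd int (Nprime N)" "int (Ndprime N) dvd sum_squares N"
  "int (Ndprime N) dvd sum_choose2 N"
proof -
  have "Nprime N = Ndprime N * (if 3 dvd N then 3 else 1)"
    unfolding Ndprime_def Nprime_def coprime_3_iff by presburger
  then show "int (Ndprime N) dvd int (Nprime N)"
    by (metis dvd_triv_left int_dvd_int_iff)
  have N: "int N * y = int (Ndprime N) * (cofactor6 (int N) * y)" for y
    using Ndprime_cofactor6[of N] by simp
  show "int (Ndprime N) dvd sum_squares N"
    by (rule dvd_sixth[OF _ six_dvd_cofactor6(1)[of "int N"]]) (simp add: six_sum_squares N mult.assoc)
  show "int (Ndprime N) dvd sum_choose2 N"
    by (rule dvd_sixth[OF _ six_dvd_cofactor6(2)[of "int N"]]) (simp add: six_sum_choose2 N mult.assoc)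
qed

lemma Nprime_dvd_choose2: "int (Nprime N) dvd choose2 (int N)"
proof (cases "even N")
  case True
  then obtain k where "N = 2 * k" by (elim evenE)
  then have "choose2 (int N) = int k * (2 * int k - 1)" by (simp add: choose2_def)
  then show ?thesis using \<open>N = 2 * k\<close> by (simp add: Nprime_def)
next
  case False
  then obtain k where "N = 2 * k + 1" by (elim oddE)
  then have "choose2 (int N) = int N * int k" by (simp add: choose2_def)
  then show ?thesis using False by (simp add: Nprime_def)
qed

lemma psi_pow_N_dvd:
  "int (Ndprime N) dvd psi1 (g [^]\<^bsub>F2\<^esub> N)" "int (Ndprime N) dvd psi2 (g [^]\<^bsub>F2\<^esub> N)"
  "int (Nprime N) dvd psi3 (g [^]\<^bsub>F2\<^esub> N)"
proof -
  have m: "int (Nprime N) dvd int N" "int (Nprime N) dvd choose2 (int N)"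
    using Nprime_dvd Nprime_dvd_choose2 by simp_all
  moreover from m have "int (Ndprime N) dvd int N" "int (Ndprime N) dvd choose2 (int N)"
    using Ndprime_dvd(1) dvd_trans by blast+
  ultimately show "int (Ndprime N) dvd psi1 (g [^]\<^bsub>F2\<^esub> N)" "int (Ndprime N) dvd psi2 (g [^]\<^bsub>F2\<^esub> N)"
    "int (Nprime N) dvd psi3 (g [^]\<^bsub>F2\<^esub> N)"
    unfolding psi_nat_pow using Ndprime_dvd(2,3)
    by (intro dvd_add dvd_diff dvd_mult dvd_mult2; simp)+
qed

theorem proposition10:
  fixes N :: nat and \<psi> :: "fgword \<Rightarrow> int \<times> int \<times> int"
  assumes "N \<ge> 1" and "is_psibar N \<psi>"
  shows "(\<forall>\<gamma> \<in> carrier F2. \<gamma> [^]\<^bsub>F2\<^esub> N \<in> Phi2 N \<psi>)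
       \<and> (\<forall>n::nat. 0 < n \<and> n < N \<longrightarrow> \<not> (\<forall>\<gamma> \<in> carrier F2. \<gamma> [^]\<^bsub>F2\<^esub> n \<in> Phi2 N \<psi>))"
proof (intro conjI ballI allI impI notI)
  fix \<gamma>
  assume "\<gamma> \<in> carrier F2"
  define w where "w = \<gamma> [^]\<^bsub>F2\<^esub> N"
  have w: "w \<in> Phi N" using \<open>\<gamma> \<in> carrier F2\<close> by (simp add: w_def nat_pow_in_Phi)
  have "cong3 (\<psi> w) (psi1 w, psi2 w, psi3 w) (Nprime N)"
    using assms(2) w by (rule psibar_cong_psi)
  then have "[fst (\<psi> w) = psi1 w] (mod int (Ndprime N))"
    "[fst (snd (\<psi> w)) = psi2 w] (mod int (Ndprime N))"
    "[snd (snd (\<psi> w)) = psi3 w] (mod int (Nprime N))"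
    using Ndprime_dvd(1) by (auto simp: cong3_def intro: cong_dvd_modulus)
  moreover have "[psi1 w = 0] (mod int (Ndprime N))" "[psi2 w = 0] (mod int (Ndprime N))"
    "[psi3 w = 0] (mod int (Nprime N))"
    using psi_pow_N_dvd by (simp_all add: w_def cong_0_iff)
  ultimately show "\<gamma> [^]\<^bsub>F2\<^esub> N \<in> Phi2 N \<psi>"
    using w unfolding Phi2_def w_def[symmetric] by (blast intro: cong_trans)
next
  fix n :: nat
  assume n: "0 < n \<and> n < N" and "\<forall>\<gamma> \<in> carrier F2. \<gamma> [^]\<^bsub>F2\<^esub> n \<in> Phi2 N \<psi>"
  then have "genA [^]\<^bsub>F2\<^esub> n \<in> Phi N" by (simp add: Phi2_def)
  then have "N dvd n" by (simp add: Phi_def cong_0_iff)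
  with n show False by (auto dest: dvd_imp_le)
qed

end
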